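(* Let $n\ge2$, let $X\subseteq\mathbb{N}$ be finite and let $P:[X]^2\to n$ be a colouring. Then: (1) for every $m\in\mathbb{N}$, $|\{x\in X:|\sigma_x|\le m\}|\le n^m$; (2) for every $x\in X\setminus\{\min X\}$ and every $c\in\mathrm{col}(\sigma_x)$, $\min\mathrm{ho}(\sigma_x,c)\le\sigma_x^-(|\sigma_x^-|-1)$ (the last entry of $\sigma_x^-$).
   Context: Pairs in $[X]^2$ are $(x,y)$ with $x<y$. For $x\in X$, the hereditarily minimal prehomogeneous sequence $\sigma_x$ (a finite increasing sequence of elements of $X$) is defined by $\sigma_x(0)=\min X$ and $\sigma_x(i+1)=\min\{y\in X: y>\sigma_x(i)\text{ and }P(\sigma_x(j),x)=P(\sigma_x(j),y)\text{ for all }j\le i\}$, the construction stopping at the first $i$ with $\sigma_x(i)=x$ (so $x$ is the last entry of $\sigma_x$). For $c<n$, $\mathrm{ho}(\sigma_x,c)=\{\sigma_x(i): i<|\sigma_x|-1,\ P(\sigma_x(i),x)=c\}$, and $\mathrm{col}(\sigma_x)=\{c<n:\mathrm{ho}(\sigma_x,c)\ne\emptyset\}$. Every proper nonempty initial segment of $\sigma_x$ equals $\sigma_y$ for some $y<x$ in $X$. For $x\in X\setminus\{\min X\}$, $\sigma_x^-$ denotes the longest proper initial segment $\sigma_y\subsetneq\sigma_x$ such that $\mathrm{col}(\sigma_y)\subsetneq\mathrm{col}(\sigma_x)$. *)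

theory Defs
  imports Main
begin

text \<open>Colourings P of pairs (a,b) with a<b are curried functions P a b;
  the sequence sigma_x is a list. The auxiliary function builds it step by
  step with fuel; fuel card X suffices since the entries strictly increase in X.\<close>

fun hmp_aux :: "nat set \<Rightarrow> (nat \<Rightarrow> nat \<Rightarrow> nat) \<Rightarrow> nat \<Rightarrow> nat \<Rightarrow> nat list \<Rightarrow> nat list" where
  "hmp_aux X P x 0 s = s"
| "hmp_aux X P x (Suc k) s =
     (if last s = x then s
      else hmp_aux X P x k
        (s @ [LEAST y. y \<in> X \<and> y > last s \<and> (\<forall>j<length s. P (s ! j) x = P (s ! j) y)]))"

definition hmp :: "nat set \<Rightarrow> (nat \<Rightarrow> nat \<Rightarrow> nat) \<Rightarrow> nat \<Rightarrow> nat list" where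
  "hmp X P x = hmp_aux X P x (card X) [Min X]"

definition ho :: "(nat \<Rightarrow> nat \<Rightarrow> nat) \<Rightarrow> nat list \<Rightarrow> nat \<Rightarrow> nat set" where
  "ho P s c = {s ! i | i. i < length s - 1 \<and> P (s ! i) (last s) = c}"

definition col :: "nat \<Rightarrow> (nat \<Rightarrow> nat \<Rightarrow> nat) \<Rightarrow> nat list \<Rightarrow> nat set" where
  "col n P s = {c. c < n \<and> ho P s c \<noteq> {}}"

definition hmp_minus :: "nat \<Rightarrow> nat set \<Rightarrow> (nat \<Rightarrow> nat \<Rightarrow> nat) \<Rightarrow> nat \<Rightarrow> nat list" where
  "hmp_minus n X P x = take (GREATEST k. 1 \<le> k \<and> k < length (hmp X P x) \<and>
       (\<exists>y\<in>X. y < x \<and> hmp X P y = take k (hmp X P x) \<and>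
          col n P (hmp X P y) \<subset> col n P (hmp X P x))) (hmp X P x)"

end

theory Submission
  imports Defs
begin

text \<open>Every entry of \<open>\<sigma>\<^sub>x\<close> after \<open>min X\<close> is the least element of \<open>X\<close> that continues the
  colour pattern, towards \<open>x\<close>, of the entries before it. Hence \<open>\<sigma>\<^sub>x\<close> is determined by its colour
  sequence \<open>P(\<sigma>\<^sub>x(0), x), ..., P(\<sigma>\<^sub>x(|\<sigma>\<^sub>x| - 2), x)\<close>, and as \<open>x\<close> is its last entry, the \<open>x\<close>
  with \<open>|\<sigma>\<^sub>x| \<le> m\<close> inject into the \<open>\<Sum>i<m. n^i < n^m\<close> colour words of length below \<open>m\<close>.

  For (2) let \<open>i\<close> be the first index with \<open>P(\<sigma>\<^sub>x(i), x) = c\<close>. The initial segment of \<open>\<sigma>\<^sub>x\<close> ending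
  at \<open>\<sigma>\<^sub>x(i)\<close> is the sequence of \<open>\<sigma>\<^sub>x(i)\<close>, whose colours are among those of \<open>\<sigma>\<^sub>x\<close> but miss \<open>c\<close>.
  So it is a candidate for \<open>\<sigma>\<^sub>x\<^sup>-\<close>, which therefore ends at or after \<open>\<sigma>\<^sub>x(i) \<ge> min ho(\<sigma>\<^sub>x, c)\<close>.\<close>

lemma sorted_wrt_less_butlast_less_last:
  "sorted_wrt (<) s \<Longrightarrow> y \<in> set (butlast s) \<Longrightarrow> y < (last s :: 'a :: linorder)"
  by (induction s) (auto split: if_splits)

lemma sorted_wrt_less_le_last:
  "sorted_wrt (<) s \<Longrightarrow> y \<in> set s \<Longrightarrow> y \<le> (last s :: 'a :: linorder)"
  by (induction s) (auto split: if_splits intro: less_imp_le)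

lemma distinct_last_take_eq_last:
  assumes "distinct s" "0 < k" "k \<le> length s" "last (take k s) = last s"
  shows "k = length s"
proof -
  have "s \<noteq> []" using assms(2,3) by auto
  then have "s ! (k - 1) = s ! (length s - 1)"
    using assms by (cases k) (auto simp: take_Suc_conv_app_nth last_conv_nth)
  then have "k - 1 = length s - 1" using assms(1-3) by (simp add: nth_eq_iff_index_eq)
  then show ?thesis using assms(2,3) by linarith
qed

lemma last_take_Suc: "k < length s \<Longrightarrow> last (take (Suc k) s) = s ! k"
  by (simp add: take_Suc_conv_app_nth)

definition hmp_succ :: "nat set \<Rightarrow> (nat \<Rightarrow> nat \<Rightarrow> nat) \<Rightarrow> nat \<Rightarrow> nat list \<Rightarrow> nat" where
  "hmp_succ X P x s = (LEAST y. y \<in> X \<and> y > last s \<and> (\<forall>j<length s. P (s ! j) x = P (s ! j) y))"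

text \<open>\<open>is_hmp X P x\<close> characterises \<open>hmp X P x\<close> without the fuel of \<open>hmp_aux\<close>; the states
  of \<open>hmp_aux\<close> on the way satisfy \<open>is_hmp_prefix X P x\<close>.\<close>

definition is_hmp_prefix :: "nat set \<Rightarrow> (nat \<Rightarrow> nat \<Rightarrow> nat) \<Rightarrow> nat \<Rightarrow> nat list \<Rightarrow> bool" where
  "is_hmp_prefix X P x s \<longleftrightarrow> s \<noteq> [] \<and> hd s = Min X \<and> sorted_wrt (<) s \<and> set s \<subseteq> X \<and> last s \<le> x \<and>
     (\<forall>i. Suc i < length s \<longrightarrow> s ! Suc i = hmp_succ X P x (take (Suc i) s))"

definition is_hmp :: "nat set \<Rightarrow> (nat \<Rightarrow> nat \<Rightarrow> nat) \<Rightarrow> nat \<Rightarrow> nat list \<Rightarrow> bool" where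
  "is_hmp X P x s \<longleftrightarrow> is_hmp_prefix X P x s \<and> last s = x"

lemma is_hmpD:
  assumes "is_hmp X P x s"
  shows "s \<noteq> []" "hd s = Min X" "sorted_wrt (<) s" "set s \<subseteq> X" "last s = x"
    "Suc i < length s \<Longrightarrow> s ! Suc i = hmp_succ X P x (take (Suc i) s)"
  using assms by (simp_all add: is_hmp_def is_hmp_prefix_def)

lemma is_hmpI:
  assumes "s \<noteq> []" "hd s = Min X" "sorted_wrt (<) s" "set s \<subseteq> X" "last s = x"
    "\<And>i. Suc i < length s \<Longrightarrow> s ! Suc i = hmp_succ X P x (take (Suc i) s)"
  shows "is_hmp X P x s"
  using assms by (simp add: is_hmp_def is_hmp_prefix_def)

lemma
  assumes "x \<in> X" "last s < x"
  shows hmp_succ_in: "hmp_succ X P x s \<in> X"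
    and hmp_succ_gt: "last s < hmp_succ X P x s"
    and hmp_succ_le: "hmp_succ X P x s \<le> x"
    and hmp_succ_colour: "j < length s \<Longrightarrow> P (s ! j) (hmp_succ X P x s) = P (s ! j) x"
proof -
  let ?Q = "\<lambda>y. y \<in> X \<and> y > last s \<and> (\<forall>j<length s. P (s ! j) x = P (s ! j) y)"
  have "?Q x" using assms by simp
  then have "?Q (hmp_succ X P x s)" "hmp_succ X P x s \<le> x"
    unfolding hmp_succ_def by (rule LeastI, rule Least_le)
  then show "hmp_succ X P x s \<in> X" "last s < hmp_succ X P x s" "hmp_succ X P x s \<le> x"
    "j < length s \<Longrightarrow> P (s ! j) (hmp_succ X P x s) = P (s ! j) x"
    by auto
qed

lemma hmp_succ_cong:
  "(\<And>j. j < length s \<Longrightarrow> P (s ! j) x = P (s ! j) x') \<Longrightarrow> hmp_succ X P x s = hmp_succ X P x' s"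
  unfolding hmp_succ_def by (metis (no_types, lifting))

lemma is_hmp_prefix_snoc:
  assumes s: "is_hmp_prefix X P x s" and "x \<in> X" "last s \<noteq> x"
  shows "is_hmp_prefix X P x (s @ [hmp_succ X P x s])"
proof -
  define a where "a = hmp_succ X P x s"
  have "last s < x" using s \<open>last s \<noteq> x\<close> by (simp add: is_hmp_prefix_def)
  then have a: "a \<in> X" "last s < a" "a \<le> x"
    unfolding a_def using \<open>x \<in> X\<close> by (simp_all add: hmp_succ_in hmp_succ_gt hmp_succ_le)
  have "\<forall>y\<in>set s. y < a"
    using s a sorted_wrt_less_le_last[of s] by (fastforce simp: is_hmp_prefix_def)
  moreover have "(s @ [a]) ! Suc i = hmp_succ X P x (take (Suc i) (s @ [a]))"
    if "Suc i < length (s @ [a])" for i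
  proof (cases "Suc i < length s")
    case True
    then show ?thesis using s by (simp add: is_hmp_prefix_def nth_append)
  next
    case False
    then have "Suc i = length s" using that by simp
    then show ?thesis by (simp add: a_def)
  qed
  ultimately show ?thesis
    using s a unfolding a_def is_hmp_prefix_def by (auto simp: sorted_wrt_append)
qed

lemma is_hmp_hmp_aux:
  assumes "finite X" "x \<in> X" "is_hmp_prefix X P x s" "card {y \<in> X. last s < y \<and> y \<le> x} \<le> k"
  shows "is_hmp X P x (hmp_aux X P x k s)"
  using assms(3,4)
proof (induction k arbitrary: s)
  case 0
  then have "{y \<in> X. last s < y \<and> y \<le> x} = {}" using \<open>finite X\<close> by simp
  then have "\<not> last s < x" using \<open>x \<in> X\<close> by blast
  then have "last s = x" using 0 by (simp add: is_hmp_prefix_def)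
  then show ?case using 0 by (simp add: is_hmp_def)
next
  case (Suc k)
  show ?case
  proof (cases "last s = x")
    case True
    then show ?thesis using Suc.prems by (simp add: is_hmp_def)
  next
    case False
    define a where "a = hmp_succ X P x s"
    have "last s < x" using Suc.prems False by (simp add: is_hmp_prefix_def)
    then have "a \<in> X" "last s < a" "a \<le> x"
      unfolding a_def using \<open>x \<in> X\<close> by (simp_all add: hmp_succ_in hmp_succ_gt hmp_succ_le)
    then have "{y \<in> X. a < y \<and> y \<le> x} \<subset> {y \<in> X. last s < y \<and> y \<le> x}" by auto
    then have "card {y \<in> X. a < y \<and> y \<le> x} < card {y \<in> X. last s < y \<and> y \<le> x}"
      using \<open>finite X\<close> by (intro psubset_card_mono) auto
    then have "card {y \<in> X. last (s @ [a]) < y \<and> y \<le> x} \<le> k"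
      using Suc.prems(2) by simp
    with Suc.IH is_hmp_prefix_snoc[OF Suc.prems(1) \<open>x \<in> X\<close> False]
    have "is_hmp X P x (hmp_aux X P x k (s @ [a]))" unfolding a_def by blast
    then show ?thesis using False by (simp add: a_def hmp_succ_def)
  qed
qed

lemma is_hmp_hmp:
  assumes "finite X" "x \<in> X"
  shows "is_hmp X P x (hmp X P x)"
  unfolding hmp_def
proof (rule is_hmp_hmp_aux[OF assms])
  show "is_hmp_prefix X P x [Min X]"
    using assms by (auto simp: is_hmp_prefix_def intro: Min_in)
  show "card {y \<in> X. last [Min X] < y \<and> y \<le> x} \<le> card X"
    using assms by (intro card_mono) auto
qed

lemma is_hmp_butlast:
  assumes "is_hmp X P x s" "y \<in> set (butlast s)"
  shows "y \<in> X" "y < x"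
  using is_hmpD(3-5)[OF assms(1)] assms(2) sorted_wrt_less_butlast_less_last[of s y]
    in_set_butlastD[of y s] by auto

lemma is_hmp_colour:
  assumes s: "is_hmp X P x s" and "i < k" "k < length s"
  shows "P (s ! i) (s ! k) = P (s ! i) x"
proof -
  obtain k' where k': "k = Suc k'" using \<open>i < k\<close> by (cases k) auto
  have "s ! k' \<in> set (butlast s)"
    using \<open>k < length s\<close> k' by (simp add: nth_butlast[symmetric])
  then have "last (take (Suc k') s) < x"
    using is_hmp_butlast[OF s] \<open>k < length s\<close> k' by (simp add: take_Suc_conv_app_nth)
  moreover have "x \<in> X" using is_hmpD(1,4,5)[OF s] by (metis last_in_set subsetD)
  moreover have "s ! k = hmp_succ X P x (take (Suc k') s)"
    using is_hmpD(6)[OF s] \<open>k < length s\<close> k' by simp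
  ultimately show ?thesis
    using hmp_succ_colour[of x X "take (Suc k') s" i P] \<open>i < k\<close> k' \<open>k < length s\<close> by simp
qed

text \<open>The colour hypothesis is only required along a common prefix, so that it covers both
  \<open>x = x'\<close> (uniqueness) and equal colour sequences (injectivity).\<close>

lemma is_hmp_take_eq:
  assumes s: "is_hmp X P x s" and s': "is_hmp X P x' s'"
    and colours: "\<And>j. Suc j < length s \<Longrightarrow> Suc j < length s' \<Longrightarrow> s ! j = s' ! j \<Longrightarrow>
      P (s ! j) x = P (s' ! j) x'"
  shows "k \<le> length s \<Longrightarrow> k \<le> length s' \<Longrightarrow> take k s = take k s'"
proof (induction k)
  case 0
  then show ?case by simp
next
  case (Suc k)
  have IH: "take k s = take k s'" using Suc by simp
  have "s ! k = s' ! k"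
  proof (cases k)
    case 0
    then show ?thesis using is_hmpD(1,2)[OF s] is_hmpD(1,2)[OF s'] by (simp add: hd_conv_nth)
  next
    case (Suc k')
    have prefix: "s ! j = s' ! j" if "j < k" for j
      using IH that by (metis nth_take)
    have "hmp_succ X P x (take k s) = hmp_succ X P x' (take k s)"
    proof (rule hmp_succ_cong)
      fix j assume "j < length (take k s)"
      then have "j < k" "Suc j < length s" "Suc j < length s'" using Suc.prems by auto
      then show "P (take k s ! j) x = P (take k s ! j) x'" using colours prefix by simp
    qed
    then show ?thesis
      using is_hmpD(6)[OF s] is_hmpD(6)[OF s'] Suc.prems IH \<open>k = Suc k'\<close> by simp
  qed
  then show ?case using IH Suc.prems by (simp add: take_Suc_conv_app_nth)
qed

lemma is_hmp_unique:
  assumes s: "is_hmp X P x s" and s': "is_hmp X P x s'"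
  shows "s = s'"
proof -
  define k where "k = min (length s) (length s')"
  have eq: "take k s = take k s'"
    using is_hmp_take_eq[OF s s'] by (simp add: k_def)
  have ne: "s \<noteq> []" "s' \<noteq> []" and last: "last s = x" "last s' = x"
    and dist: "distinct s" "distinct s'"
    using is_hmpD(1,3,5)[OF s] is_hmpD(1,3,5)[OF s'] by (simp_all add: strict_sorted_iff)
  have "take k s = s \<or> take k s' = s'" unfolding k_def by (simp add: min_def)
  then have "last (take k s) = last s" "last (take k s') = last s'"
    using eq last by auto
  moreover have "0 < k" "k \<le> length s" "k \<le> length s'" using ne by (simp_all add: k_def)
  ultimately have "k = length s" "k = length s'"
    using distinct_last_take_eq_last[OF dist(1)] distinct_last_take_eq_last[OF dist(2)] by simp_all
  then show ?thesis using eq by simp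
qed

lemma hmp_eqI: "finite X \<Longrightarrow> x \<in> X \<Longrightarrow> is_hmp X P x s \<Longrightarrow> hmp X P x = s"
  by (rule is_hmp_unique[OF is_hmp_hmp])

lemma is_hmp_take:
  assumes s: "is_hmp X P x s" and "k < length s"
  shows "is_hmp X P (s ! k) (take (Suc k) s)"
proof (rule is_hmpI)
  show "take (Suc k) s \<noteq> []" "hd (take (Suc k) s) = Min X"
    using is_hmpD(1,2)[OF s] by simp_all
  show "sorted_wrt (<) (take (Suc k) s)" using is_hmpD(3)[OF s] by (rule sorted_wrt_take)
  show "set (take (Suc k) s) \<subseteq> X" using is_hmpD(4)[OF s] by (meson order_trans set_take_subset)
  show "last (take (Suc k) s) = s ! k" using \<open>k < length s\<close> by (rule last_take_Suc)
next
  fix i assume "Suc i < length (take (Suc k) s)"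
  then have "i < k" "Suc i < length s" by auto
  have "hmp_succ X P x (take (Suc i) s) = hmp_succ X P (s ! k) (take (Suc i) s)"
  proof (rule hmp_succ_cong)
    fix j assume "j < length (take (Suc i) s)"
    then have "j < k" "take (Suc i) s ! j = s ! j" using \<open>i < k\<close> by auto
    then show "P (take (Suc i) s ! j) x = P (take (Suc i) s ! j) (s ! k)"
      using is_hmp_colour[OF s \<open>j < k\<close> \<open>k < length s\<close>] by simp
  qed
  then show "take (Suc k) s ! Suc i = hmp_succ X P (s ! k) (take (Suc i) (take (Suc k) s))"
    using is_hmpD(6)[OF s \<open>Suc i < length s\<close>] \<open>i < k\<close> by simp
qed

lemma hmp_nth:
  assumes "finite X" "x \<in> X" "k < length (hmp X P x)"
  shows "hmp X P (hmp X P x ! k) = take (Suc k) (hmp X P x)"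
proof (rule hmp_eqI[OF \<open>finite X\<close>])
  have \<sigma>: "is_hmp X P x (hmp X P x)" using is_hmp_hmp assms(1,2) by blast
  then show "hmp X P x ! k \<in> X" using is_hmpD(4)[OF \<sigma>] assms(3) nth_mem by blast
  show "is_hmp X P (hmp X P x ! k) (take (Suc k) (hmp X P x))" using is_hmp_take[OF \<sigma> assms(3)] .
qed

lemma ho_is_hmp:
  "is_hmp X P x s \<Longrightarrow> ho P s c = {s ! i | i. i < length s - 1 \<and> P (s ! i) x = c}"
  by (simp add: ho_def is_hmpD(5))

lemma ho_take_is_hmp:
  assumes s: "is_hmp X P x s" and "k < length s"
  shows "ho P (take (Suc k) s) c = {s ! i | i. i < k \<and> P (s ! i) x = c}"
proof -
  have "ho P (take (Suc k) s) c = {take (Suc k) s ! i | i. i < k \<and> P (take (Suc k) s ! i) (s ! k) = c}"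
    using \<open>k < length s\<close> by (simp add: ho_def last_take_Suc)
  also have "\<dots> = {s ! i | i. i < k \<and> P (s ! i) x = c}"
    using is_hmp_colour[OF s _ \<open>k < length s\<close>] by (intro Collect_cong ex_cong1) auto
  finally show ?thesis .
qed

definition colour_seq :: "(nat \<Rightarrow> nat \<Rightarrow> nat) \<Rightarrow> nat list \<Rightarrow> nat list" where
  "colour_seq P s = map (\<lambda>y. P y (last s)) (butlast s)"

lemma is_hmp_colour_seq_inj:
  assumes s: "is_hmp X P x s" and s': "is_hmp X P x' s'"
    and "colour_seq P s = colour_seq P s'"
  shows "s = s'"
proof -
  have ne: "s \<noteq> []" "s' \<noteq> []" and last: "last s = x" "last s' = x'"
    using is_hmpD(1,5)[OF s] is_hmpD(1,5)[OF s'] by simp_all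
  have "length (butlast s) = length (butlast s')"
    using \<open>colour_seq P s = colour_seq P s'\<close> by (metis colour_seq_def length_map)
  then have len: "length s = length s'"
    using ne by (metis append_butlast_last_id length_append_singleton)
  have colours: "P (s ! j) x = P (s' ! j) x'" if "Suc j < length s" for j
    using arg_cong[OF \<open>colour_seq P s = colour_seq P s'\<close>, of "\<lambda>l. l ! j"] that len last
    by (simp add: colour_seq_def nth_butlast)
  have "take (length s) s = take (length s) s'"
  proof (rule is_hmp_take_eq[OF s s'])
    show "P (s ! j) x = P (s' ! j) x'" if "Suc j < length s" for j
      using that by (rule colours)
  qed (simp_all add: len)
  then show ?thesis using len by simp
qed

lemma card_lists_length_less:
  "finite A \<Longrightarrow> card {xs. set xs \<subseteq> A \<and> length xs < m} = (\<Sum>i<m. card A ^ i)"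
  by (cases m) (simp_all add: less_Suc_eq_le card_lists_length_le lessThan_Suc_atMost)

lemma sum_power_less_power:
  assumes "2 \<le> (n::nat)"
  shows "(\<Sum>i<m. n ^ i) < n ^ m"
proof (induction m)
  case (Suc m)
  have "(\<Sum>i<Suc m. n ^ i) < n ^ m + n ^ m" using Suc by simp
  also have "\<dots> \<le> n * n ^ m" using assms by (metis mult_2 mult_le_mono1)
  finally show ?case by simp
qed simp

lemma card_hmp_length_le:
  assumes "finite X" and colours: "\<forall>a\<in>X. \<forall>b\<in>X. a < b \<longrightarrow> P a b < n"
  shows "card {x \<in> X. length (hmp X P x) \<le> m} \<le> (\<Sum>i<m. n ^ i)"
proof -
  let ?S = "{x \<in> X. length (hmp X P x) \<le> m}"
  let ?words = "{l. set l \<subseteq> {..<n} \<and> length l < m}"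
  let ?f = "\<lambda>x. colour_seq P (hmp X P x)"
  have hmp_x: "is_hmp X P x (hmp X P x)" if "x \<in> X" for x
    using is_hmp_hmp[OF \<open>finite X\<close> that] .
  have "inj_on ?f ?S"
  proof (rule inj_onI)
    fix x x' assume "x \<in> ?S" "x' \<in> ?S" "?f x = ?f x'"
    from \<open>x \<in> ?S\<close> \<open>x' \<in> ?S\<close> have "x \<in> X" "x' \<in> X" by simp_all
    from hmp_x[OF \<open>x \<in> X\<close>] hmp_x[OF \<open>x' \<in> X\<close>] \<open>?f x = ?f x'\<close>
    have "hmp X P x = hmp X P x'" by (rule is_hmp_colour_seq_inj)
    then show "x = x'"
      using is_hmpD(5)[OF hmp_x[OF \<open>x \<in> X\<close>]] is_hmpD(5)[OF hmp_x[OF \<open>x' \<in> X\<close>]] by argo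
  qed
  moreover have "?f ` ?S \<subseteq> ?words"
  proof (rule image_subsetI)
    fix x assume "x \<in> ?S"
    then have x: "x \<in> X" "length (hmp X P x) \<le> m" by simp_all
    have "P y x < n" if "y \<in> set (butlast (hmp X P x))" for y
      using is_hmp_butlast[OF hmp_x[OF x(1)] that] colours x(1) by auto
    moreover have "hmp X P x \<noteq> []" "last (hmp X P x) = x"
      using is_hmpD(1,5)[OF hmp_x[OF x(1)]] by simp_all
    ultimately show "?f x \<in> ?words"
      using x(2) by (cases "hmp X P x" rule: rev_cases) (auto simp: colour_seq_def)
  qed
  moreover have "finite ?words"
    by (rule finite_subset[OF _ finite_lists_length_le[of "{..<n}" m]]) auto
  ultimately have "card ?S \<le> card ?words" by (rule card_inj_on_le)
  then show ?thesis by (simp add: card_lists_length_less)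
qed

lemma col_take_psubset_first_colour:
  assumes s: "is_hmp X P x s" and i0: "i0 < length s - 1" "P (s ! i0) x = c" "c < n"
    and first: "\<forall>i<i0. P (s ! i) x \<noteq> c"
  shows "col n P (take (Suc i0) s) \<subset> col n P s"
proof -
  have ho_prefix: "ho P (take (Suc i0) s) c' = {s ! i | i. i < i0 \<and> P (s ! i) x = c'}" for c'
    using ho_take_is_hmp[OF s] i0(1) by simp
  have "ho P (take (Suc i0) s) c' \<subseteq> ho P s c'" for c'
    unfolding ho_prefix ho_is_hmp[OF s] using i0(1) by fastforce
  then have "col n P (take (Suc i0) s) \<subseteq> col n P s"
    unfolding col_def by blast
  moreover have "s ! i0 \<in> ho P s c"
    unfolding ho_is_hmp[OF s] using i0(1,2) by blast
  then have "c \<in> col n P s" using \<open>c < n\<close> by (auto simp: col_def)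
  moreover have "c \<notin> col n P (take (Suc i0) s)"
    using first by (simp add: col_def ho_prefix)
  ultimately show ?thesis by blast
qed

lemma hmp_minus_longest:
  assumes "1 \<le> k" "k < length (hmp X P x)"
    and "\<exists>y\<in>X. y < x \<and> hmp X P y = take k (hmp X P x) \<and> col n P (hmp X P y) \<subset> col n P (hmp X P x)"
  obtains K where "k \<le> K" "K < length (hmp X P x)" "hmp_minus n X P x = take K (hmp X P x)"
proof -
  define Q where "Q = (\<lambda>k. 1 \<le> k \<and> k < length (hmp X P x) \<and>
       (\<exists>y\<in>X. y < x \<and> hmp X P y = take k (hmp X P x) \<and> col n P (hmp X P y) \<subset> col n P (hmp X P x)))"
  have "Q k" using assms by (simp add: Q_def)
  have bound: "\<And>k. Q k \<Longrightarrow> k \<le> length (hmp X P x)" by (simp add: Q_def)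
  have "k \<le> Greatest Q" "Q (Greatest Q)"
    using Greatest_le_nat[of Q, OF \<open>Q k\<close> bound] GreatestI_nat[of Q, OF \<open>Q k\<close> bound] by simp_all
  moreover have "hmp_minus n X P x = take (Greatest Q) (hmp X P x)"
    by (simp add: hmp_minus_def Q_def)
  ultimately show ?thesis using that by (simp add: Q_def)
qed

lemma Min_ho_le_last_hmp_minus:
  assumes "finite X" "x \<in> X" and c: "c \<in> col n P (hmp X P x)"
  shows "Min (ho P (hmp X P x) c) \<le> last (hmp_minus n X P x)"
proof -
  define \<sigma> where "\<sigma> = hmp X P x"
  have \<sigma>: "is_hmp X P x \<sigma>" using is_hmp_hmp[OF assms(1,2)] by (simp add: \<sigma>_def)
  have "c < n" "ho P \<sigma> c \<noteq> {}" using c by (simp_all add: col_def \<sigma>_def)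
  then obtain i where "i < length \<sigma> - 1 \<and> P (\<sigma> ! i) x = c"
    unfolding ho_is_hmp[OF \<sigma>] by blast
  then obtain i0 where i0: "i0 < length \<sigma> - 1" "P (\<sigma> ! i0) x = c"
    and first: "\<forall>i<i0. P (\<sigma> ! i) x \<noteq> c"
    using ex_least_nat_le[of "\<lambda>i. i < length \<sigma> - 1 \<and> P (\<sigma> ! i) x = c"] by fastforce
  have "\<sigma> ! i0 \<in> set (butlast \<sigma>)" using i0 by (simp add: nth_butlast[symmetric])
  then have "\<sigma> ! i0 \<in> X" "\<sigma> ! i0 < x" using is_hmp_butlast[OF \<sigma>] by simp_all
  moreover have "hmp X P (\<sigma> ! i0) = take (Suc i0) \<sigma>"
    using hmp_nth[OF assms(1,2)] i0 unfolding \<sigma>_def by simp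
  moreover have "col n P (take (Suc i0) \<sigma>) \<subset> col n P \<sigma>"
    by (rule col_take_psubset_first_colour[OF \<sigma> i0 \<open>c < n\<close> first])
  ultimately have candidate:
    "\<exists>y\<in>X. y < x \<and> hmp X P y = take (Suc i0) \<sigma> \<and> col n P (hmp X P y) \<subset> col n P \<sigma>"
    by (intro bexI[of _ "\<sigma> ! i0"] conjI) simp_all
  have "Suc i0 < length \<sigma>" using i0(1) by simp
  obtain K where K: "Suc i0 \<le> K" "K < length \<sigma>" "hmp_minus n X P x = take K \<sigma>"
    by (rule hmp_minus_longest[of "Suc i0" X P x n, folded \<sigma>_def, OF _ \<open>Suc i0 < length \<sigma>\<close> candidate])
      auto
  then have "last (hmp_minus n X P x) = \<sigma> ! (K - 1)"
    using last_take_Suc[of "K - 1" \<sigma>] by simp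
  moreover have "\<sigma> ! i0 \<le> \<sigma> ! (K - 1)"
    using strict_sorted_imp_sorted[OF is_hmpD(3)[OF \<sigma>]] K by (intro sorted_nth_mono) simp_all
  moreover have "finite (ho P \<sigma> c)"
    by (rule finite_subset[of _ "set \<sigma>"]) (auto simp: ho_def)
  moreover have "\<sigma> ! i0 \<in> ho P \<sigma> c"
    unfolding ho_is_hmp[OF \<sigma>] using i0 by blast
  ultimately show ?thesis unfolding \<sigma>_def by (metis Min_le order_trans)
qed

theorem lemma2p8:
  fixes n :: nat and X :: "nat set" and P :: "nat \<Rightarrow> nat \<Rightarrow> nat"
  assumes "n \<ge> 2"
    and "finite X"
    and "\<forall>a\<in>X. \<forall>b\<in>X. a < b \<longrightarrow> P a b < n"
  shows "(\<forall>m::nat. card {x \<in> X. length (hmp X P x) \<le> m} \<le> n ^ m)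
    \<and> (\<forall>x \<in> X - {Min X}. \<forall>c \<in> col n P (hmp X P x).
          Min (ho P (hmp X P x) c) \<le> last (hmp_minus n X P x))"
proof (intro conjI allI ballI)
  fix m
  have "card {x \<in> X. length (hmp X P x) \<le> m} \<le> (\<Sum>i<m. n ^ i)"
    by (rule card_hmp_length_le[OF assms(2,3)])
  also have "\<dots> \<le> n ^ m"
    using sum_power_less_power[OF assms(1)] by (rule less_imp_le)
  finally show "card {x \<in> X. length (hmp X P x) \<le> m} \<le> n ^ m" .
next
  fix x c assume "x \<in> X - {Min X}" "c \<in> col n P (hmp X P x)"
  then show "Min (ho P (hmp X P x) c) \<le> last (hmp_minus n X P x)"
    using Min_ho_le_last_hmp_minus[OF assms(2)] by simp
qed

end
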